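(* Let $\mathcal{H}$ be a finite-dimensional Hilbert space, $\{\rho_\theta;\theta\in\Theta\subset\mathbb{R}^d\}$ a smooth family of density operators, $\theta_0\in\Theta$ with $\rho=\rho_{\theta_0}$ strictly positive, and let $\{D_j^{(S)}\}_{j=1}^r$ be a basis of a $\mathcal{D}_\rho$ invariant extension of the SLD tangent space with $D_i^{(S)}=L_i^{(S)}$ for $1\le i\le d$. Let $\Sigma_{ij}=\operatorname{Tr}\rho D_j^{(S)}D_i^{(S)}$, $R=(\operatorname{Re}\Sigma)^{-1}\Sigma(\operatorname{Re}\Sigma)^{-1}=\begin{pmatrix}R_1&R_2^*\\R_2&R_3\end{pmatrix}$ with $R_1$ of size $d\times d$, $R_2$ of size $(r-d)\times d$, $R_3$ of size $(r-d)\times(r-d)$. For $\beta\in[0,1]$ let $D_i^{(\beta)}=(I+\beta\sqrt{-1}\mathcal{D}_\rho)^{-1}(D_i^{(S)})$ ($1\le i\le r$) and $\tilde J^{(\beta)}_{\theta_0}=[\langle D_i^{(\beta)},D_j^{(\beta)}\rangle^{(\beta)}]_{1\le i,j\le r}$. Then $$(\tilde J^{(\beta)}_{\theta_0})^{-1}=\operatorname{Re}R+\beta\sqrt{-1}\operatorname{Im}R,$$ and $$(J^{(\beta)}_{\theta_0})^{-1}=R_1^{(\beta)}-R_2^{(\beta)*}(R_3^{(\beta)})^{-1}R_2^{(\beta)},$$ where $R_k^{(\beta)}=\operatorname{Re}R_k+\beta\sqrt{-1}\operatorname{Im}R_k$ for $k=1,2,3$.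
   Context: $\partial_i\rho=\frac{\partial}{\partial\theta^i}\rho_\theta|_{\theta=\theta_0}$. SLDs $L_i^{(S)}$: Hermitian with $\partial_i\rho=\frac12(\rho L_i^{(S)}+L_i^{(S)}\rho)$, assumed linearly independent; SLD tangent space $\mathcal{T}=\operatorname{span}_{\mathbb{R}}\{L_i^{(S)}\}$. Commutation operator: $\mathcal{D}_\rho(X)\rho+\rho\mathcal{D}_\rho(X)=\sqrt{-1}(X\rho-\rho X)$; a $\mathcal{D}_\rho$ invariant extension of $\mathcal{T}$ is a real subspace of Hermitian operators containing $\mathcal{T}$ and mapped into itself by $\mathcal{D}_\rho$. Inner product on $\mathcal{B}(\mathcal{H})$: $\langle X,Y\rangle^{(\beta)}=\frac12\operatorname{Tr}X^*\{(1+\beta)\rho Y+(1-\beta)Y\rho\}$. The $\beta$ logarithmic derivatives $L_i^{(\beta)}$ are defined by $\partial_i\rho=\frac{1+\beta}{2}\rho L_i^{(\beta)}+\frac{1-\beta}{2}L_i^{(\beta)}\rho$, and $J^{(\beta)}_{\theta_0}=[\langle L_i^{(\beta)},L_j^{(\beta)}\rangle^{(\beta)}]_{ij}$. Re, Im are entrywise. *)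

theory Defs
  imports "HOL-Analysis.Analysis" "Jordan_Normal_Form.Gauss_Jordan_Elimination"
begin

no_notation Matrix.vec_index (infixl \<open>$\<close> 100)

text \<open>The r x r (and d x d) Gram-type
  matrices of the paper are Jordan_Normal_Form matrices of type complex mat,
  indexed from 0.\<close>

type_synonym 'n op = "complex^'n^'n"

definition op_smult :: "complex \<Rightarrow> 'n::finite op \<Rightarrow> 'n op" (infixr "*:" 75) where
  "c *: A = (\<chi> i j. c * A $ i $ j)"

definition op_adj :: "'n::finite op \<Rightarrow> 'n op" where
  "op_adj A = (\<chi> i j. cnj (A $ j $ i))"

definition hermitian_op :: "'n::finite op \<Rightarrow> bool" where
  "hermitian_op A \<longleftrightarrow> op_adj A = A"

definition qform :: "'n::finite op \<Rightarrow> complex^'n \<Rightarrow> complex" where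
  "qform A x = (\<Sum>i\<in>UNIV. cnj (x $ i) * (A *v x) $ i)"

definition density_op :: "'n::finite op \<Rightarrow> bool" where
  "density_op A \<longleftrightarrow> hermitian_op A \<and> (\<forall>x. 0 \<le> Re (qform A x)) \<and> trace A = 1"

definition strictly_positive :: "'n::finite op \<Rightarrow> bool" where
  "strictly_positive A \<longleftrightarrow> hermitian_op A \<and> (\<forall>x. x \<noteq> 0 \<longrightarrow> 0 < Re (qform A x))"

definition comm_op :: "'n::finite op \<Rightarrow> 'n op \<Rightarrow> 'n op" where
  "comm_op \<rho> X = (THE Y. Y ** \<rho> + \<rho> ** Y = \<i> *: (X ** \<rho> - \<rho> ** X))"

definition beta_ip :: "real \<Rightarrow> 'n::finite op \<Rightarrow> 'n op \<Rightarrow> 'n op \<Rightarrow> complex" where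
  "beta_ip \<beta> \<rho> X Y = (1/2) * trace (op_adj X ** (complex_of_real (1 + \<beta>) *: (\<rho> ** Y)
                                        + complex_of_real (1 - \<beta>) *: (Y ** \<rho>)))"

definition beta_logder :: "real \<Rightarrow> 'n::finite op \<Rightarrow> 'n op \<Rightarrow> 'n op" where
  "beta_logder \<beta> \<rho> dR = (THE L. dR = complex_of_real ((1 + \<beta>)/2) *: (\<rho> ** L)
                                       + complex_of_real ((1 - \<beta>)/2) *: (L ** \<rho>))"

abbreviation SLD :: "'n::finite op \<Rightarrow> 'n op \<Rightarrow> 'n op" where
  "SLD \<equiv> beta_logder 0"

definition beta_transform :: "real \<Rightarrow> 'n::finite op \<Rightarrow> 'n op \<Rightarrow> 'n op" where
  "beta_transform \<beta> \<rho> X = (THE Y. Y + (complex_of_real \<beta> * \<i>) *: comm_op \<rho> Y = X)"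

definition ReM :: "complex mat \<Rightarrow> complex mat" where
  "ReM A = map_mat (\<lambda>z. complex_of_real (Re z)) A"

definition ImM :: "complex mat \<Rightarrow> complex mat" where
  "ImM A = map_mat (\<lambda>z. complex_of_real (Im z)) A"

definition adjM :: "complex mat \<Rightarrow> complex mat" where
  "adjM A = Matrix.mat (dim_col A) (dim_row A) (\<lambda>(i,j). cnj (A $$ (j,i)))"

definition beta_part :: "real \<Rightarrow> complex mat \<Rightarrow> complex mat" where
  "beta_part \<beta> A = ReM A + (complex_of_real \<beta> * \<i>) \<cdot>\<^sub>m ImM A"

definition minv :: "complex mat \<Rightarrow> complex mat" where
  "minv A = the (mat_inverse A)"

end

(*
  All operators in the statement are built from L(a,b) Y = a rho Y + b Y rho, which is positive
  definite for the Hilbert-Schmidt pairing when rho > 0, a, b >= 0 and a + b > 0, hence bijective.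
  Since L(1,1) (D_rho Y) = i (Y rho - rho Y), one has L(1,1) o (I + beta i D_rho) = L(1+beta,1-beta).
  Therefore D_j^(beta) = (I + beta i D_rho)^-1 D_j satisfies <X, D_j^(beta)>^(beta) = <X, D_j>^(0),
  and the beta logarithmic derivatives are L_i^(beta) = D_i^(beta).

  Write D_rho D_l = sum_m A_ml D_m and G = Re Sigma, the SLD Gram matrix of the D_j.  Then
  Im Sigma = G A, and expanding D_k = (I + beta i D_rho) D_k^(beta) in the D_j^(beta) gives
  (1 - beta i A^* ) Jt = G for the Gram matrix Jt of the D_j^(beta).  As G is real symmetric and
  Im Sigma is antisymmetric, G^-1 A^* = - A G^-1; hence R = G^-1 + i A G^-1 and
  Re R + beta i Im R = G^-1 (1 - beta i A^* ) = Jt^-1.  J^(beta) is the upper left block of Jt, so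
  the second identity is the Schur complement formula for the inverse of a block matrix; the
  off-diagonal blocks of Jt^-1 are adjoint to each other because R is Hermitian.
*)
theory Submission
  imports Defs "Jordan_Normal_Form.Determinant"
begin

no_notation Matrix.vec_index (infixl \<open>$\<close> 100)

lemma op_smult_nth [simp]: "(c *: A) $ i $ j = c * A $ i $ j"
  by (simp add: op_smult_def)

lemma op_adj_nth [simp]: "op_adj A $ i $ j = cnj (A $ j $ i)"
  by (simp add: op_adj_def)

lemma matrix_mult_nth: "(A ** B) $ i $ j = (\<Sum>k\<in>UNIV. A $ i $ k * B $ k $ j)"
  by (simp add: matrix_matrix_mult_def)

lemma op_eqI:
  assumes "\<And>i j. (A::'a^'n^'m) $ i $ j = B $ i $ j"
  shows "A = B"
  using assms by (simp add: Finite_Cartesian_Product.vec_eq_iff)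

lemma matrix_add_rdistrib: "((A::'a::semiring_1^'n^'m) + B) ** C = A ** C + B ** C"
  by (rule op_eqI) (simp add: matrix_mult_nth algebra_simps sum.distrib)

lemma matrix_diff_ldistrib: "(A::'a::ring_1^'n^'m) ** (B - C) = A ** B - A ** C"
  by (rule op_eqI) (simp add: matrix_mult_nth algebra_simps sum_subtractf)

lemma matrix_diff_rdistrib: "((A::'a::ring_1^'n^'m) - B) ** C = A ** C - B ** C"
  by (rule op_eqI) (simp add: matrix_mult_nth algebra_simps sum_subtractf)

lemma matrix_sum_ldistrib: "(A::'a::semiring_1^'n^'m) ** sum f S = (\<Sum>x\<in>S. A ** f x)"
  by (rule op_eqI) (simp add: matrix_mult_nth sum_distrib_left sum.swap[of _ UNIV S])

lemma matrix_sum_rdistrib: "sum f S ** (B::'a::semiring_1^'n^'m) = (\<Sum>x\<in>S. f x ** B)"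
  by (rule op_eqI) (simp add: matrix_mult_nth sum_distrib_right sum.swap[of _ UNIV S])

lemma matrix_op_smult_left: "(c *: A) ** B = c *: (A ** B)"
  by (rule op_eqI) (simp add: matrix_mult_nth sum_distrib_left algebra_simps)

lemma matrix_op_smult_right: "A ** (c *: B) = c *: (A ** B)"
  by (rule op_eqI) (simp add: matrix_mult_nth sum_distrib_left algebra_simps)

lemma op_smult_add: "c *: (A + B) = c *: A + c *: B"
  by (rule op_eqI) (simp add: algebra_simps)

lemma op_smult_diff: "c *: (A - B) = c *: A - c *: B"
  by (rule op_eqI) (simp add: algebra_simps)

lemma op_smult_add_left: "(a + b) *: A = a *: A + b *: A"
  by (rule op_eqI) (simp add: algebra_simps)

lemma op_smult_op_smult: "a *: (b *: A) = (a * b) *: A"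
  by (rule op_eqI) simp

lemma op_smult_one [simp]: "1 *: A = A"
  by (rule op_eqI) simp

lemma op_smult_zero_left [simp]: "0 *: A = 0"
  by (rule op_eqI) simp

lemma op_smult_zero_right [simp]: "c *: 0 = 0"
  by (rule op_eqI) simp

lemma op_smult_sum: "c *: sum f S = (\<Sum>x\<in>S. c *: f x)"
  by (rule op_eqI) (simp add: sum_distrib_left)

lemma scaleR_eq_op_smult: "r *\<^sub>R A = complex_of_real r *: A"
proof (rule op_eqI)
  fix i j
  have "(r *\<^sub>R A) $ i $ j = r *\<^sub>R (A $ i $ j)" by simp
  then show "(r *\<^sub>R A) $ i $ j = (complex_of_real r *: A) $ i $ j"
    by (simp add: scaleR_conv_of_real)
qed

lemma op_adj_matrix_mult: "op_adj (A ** B) = op_adj B ** op_adj A"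
  by (rule op_eqI) (simp add: matrix_mult_nth mult.commute)

lemma op_adj_op_smult: "op_adj (c *: A) = cnj c *: op_adj A"
  by (rule op_eqI) simp

lemma op_adj_sum: "op_adj (sum f S) = (\<Sum>x\<in>S. op_adj (f x))"
  by (rule op_eqI) simp

lemma op_adj_op_adj [simp]: "op_adj (op_adj A) = A"
  by (rule op_eqI) simp

lemma op_adj_zero [simp]: "op_adj 0 = 0"
  by (rule op_eqI) simp

lemma op_adj_eq_0_iff [simp]: "op_adj A = 0 \<longleftrightarrow> A = 0"
  by (metis op_adj_op_adj op_adj_nth op_eqI zero_index complex_cnj_zero)

lemma trace_op_smult: "trace (c *: A) = c * trace A"
  by (simp add: trace_def sum_distrib_left)

lemma trace_sum: "trace (sum f S) = (\<Sum>x\<in>S. trace (f x))"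
  unfolding trace_def by (simp add: sum.swap[of _ UNIV S])

lemma trace_op_adj: "trace (op_adj A) = cnj (trace A)"
  by (simp add: trace_def)

lemma sum_op_smult_map:
  fixes f :: "'n::finite op \<Rightarrow> 'm::finite op"
  assumes add: "\<And>X Y. f (X + Y) = f X + f Y" and smult: "\<And>c X. f (c *: X) = c *: f X"
  shows "f (\<Sum>j\<in>S. c j *: X j) = (\<Sum>j\<in>S. c j *: f (X j))"
proof (induction S rule: infinite_finite_induct)
  case (infinite S)
  show ?case using smult[of 0 0] infinite by simp
next
  case empty
  show ?case using smult[of 0 0] by simp
next
  case (insert x F)
  then show ?case by (simp add: add smult)
qed

definition hs_inner :: "'n::finite op \<Rightarrow> 'n op \<Rightarrow> complex" where
  "hs_inner X Y = trace (op_adj X ** Y)"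

lemma hs_inner_add_right: "hs_inner X (Y + Z) = hs_inner X Y + hs_inner X Z"
  by (simp add: hs_inner_def matrix_add_ldistrib trace_add)

lemma hs_inner_op_smult_right: "hs_inner X (c *: Y) = c * hs_inner X Y"
  by (simp add: hs_inner_def matrix_op_smult_right trace_op_smult)

lemma hs_inner_op_smult_left: "hs_inner (c *: X) Y = cnj c * hs_inner X Y"
  by (simp add: hs_inner_def op_adj_op_smult matrix_op_smult_left trace_op_smult)

lemma hs_inner_sum_right: "hs_inner X (sum f S) = (\<Sum>x\<in>S. hs_inner X (f x))"
  by (simp add: hs_inner_def matrix_sum_ldistrib trace_sum)

lemma hs_inner_sum_left: "hs_inner (sum f S) Y = (\<Sum>x\<in>S. hs_inner (f x) Y)"
  by (simp add: hs_inner_def op_adj_sum matrix_sum_rdistrib trace_sum)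

lemma hs_inner_left_mult_eq_qform_sum:
  "hs_inner X (\<rho> ** X) = (\<Sum>j\<in>UNIV. qform \<rho> (\<chi> k. X $ k $ j))"
  by (simp add: hs_inner_def trace_def matrix_mult_nth qform_def matrix_vector_mult_def)

lemma hs_inner_left_mult_pos:
  assumes \<rho>: "strictly_positive \<rho>" and X: "X \<noteq> 0"
  shows "0 < Re (hs_inner X (\<rho> ** X))"
proof -
  have nonneg: "0 \<le> Re (qform \<rho> (\<chi> k. X $ k $ j))" for j
    using \<rho> by (cases "(\<chi> k. X $ k $ j) = 0") (auto simp: strictly_positive_def qform_def less_imp_le)
  from X obtain k j where "X $ k $ j \<noteq> 0" by (metis op_eqI zero_index)
  then have "(\<chi> k. X $ k $ j) \<noteq> 0" by (metis vec_lambda_beta zero_index)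
  then have "0 < Re (qform \<rho> (\<chi> k. X $ k $ j))" using \<rho> by (simp add: strictly_positive_def)
  then have "0 < (\<Sum>j\<in>UNIV. Re (qform \<rho> (\<chi> k. X $ k $ j)))"
    by (intro sum_pos2[where i=j]) (auto intro: nonneg)
  then show ?thesis by (simp add: hs_inner_left_mult_eq_qform_sum Re_sum)
qed

lemma hs_inner_right_mult_pos:
  assumes \<rho>: "strictly_positive \<rho>" and X: "X \<noteq> 0"
  shows "0 < Re (hs_inner X (X ** \<rho>))"
proof -
  have "hs_inner X (X ** \<rho>) = hs_inner (op_adj X) (\<rho> ** op_adj X)"
    unfolding hs_inner_def op_adj_op_adj by (metis trace_mul_sym matrix_mul_assoc)
  then show ?thesis using hs_inner_left_mult_pos[OF \<rho>, of "op_adj X"] X by simp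
qed

definition lr_mult :: "real \<Rightarrow> real \<Rightarrow> 'n::finite op \<Rightarrow> 'n op \<Rightarrow> 'n op" where
  "lr_mult a b \<rho> Y = complex_of_real a *: (\<rho> ** Y) + complex_of_real b *: (Y ** \<rho>)"

lemma lr_mult_add: "lr_mult a b \<rho> (X + Y) = lr_mult a b \<rho> X + lr_mult a b \<rho> Y"
  by (simp add: lr_mult_def matrix_add_ldistrib matrix_add_rdistrib op_smult_add algebra_simps)

lemma lr_mult_diff: "lr_mult a b \<rho> (X - Y) = lr_mult a b \<rho> X - lr_mult a b \<rho> Y"
  by (simp add: lr_mult_def matrix_diff_ldistrib matrix_diff_rdistrib op_smult_diff algebra_simps)

lemma lr_mult_op_smult: "lr_mult a b \<rho> (c *: X) = c *: lr_mult a b \<rho> X"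
  by (simp add: lr_mult_def matrix_op_smult_left matrix_op_smult_right op_smult_op_smult
      op_smult_add mult.commute)

lemma lr_mult_sum: "lr_mult a b \<rho> (\<Sum>j\<in>S. c j *: X j) = (\<Sum>j\<in>S. c j *: lr_mult a b \<rho> (X j))"
  by (rule sum_op_smult_map[OF lr_mult_add lr_mult_op_smult])

lemma lr_mult_half:
  "lr_mult ((1 + \<beta>) / 2) ((1 - \<beta>) / 2) \<rho> Y = (1 / 2) *: lr_mult (1 + \<beta>) (1 - \<beta>) \<rho> Y"
  by (rule op_eqI) (simp add: lr_mult_def field_simps)

lemma lr_mult_pos:
  assumes \<rho>: "strictly_positive \<rho>" and ab: "0 \<le> a" "0 \<le> b" "0 < a + b" and Y: "Y \<noteq> 0"
  shows "0 < Re (hs_inner Y (lr_mult a b \<rho> Y))"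
proof -
  have "Re (hs_inner Y (lr_mult a b \<rho> Y)) = a * Re (hs_inner Y (\<rho> ** Y)) + b * Re (hs_inner Y (Y ** \<rho>))"
    by (simp add: lr_mult_def hs_inner_add_right hs_inner_op_smult_right)
  also have "0 < \<dots>"
    using hs_inner_left_mult_pos[OF \<rho> Y] hs_inner_right_mult_pos[OF \<rho> Y] ab
    by (smt (verit) mult_nonneg_nonneg mult_pos_pos)
  finally show ?thesis .
qed

lemma lr_mult_inj:
  assumes \<rho>: "strictly_positive \<rho>" and ab: "0 \<le> a" "0 \<le> b" "0 < a + b"
  shows "inj (lr_mult a b \<rho>)"
proof (rule injI)
  fix X Y assume "lr_mult a b \<rho> X = lr_mult a b \<rho> Y"
  then have "lr_mult a b \<rho> (X - Y) = 0" by (simp add: lr_mult_diff)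
  then show "X = Y" using lr_mult_pos[OF \<rho> ab, of "X - Y"] by (auto simp: hs_inner_def trace_def)
qed

lemma lr_mult_bij:
  assumes \<rho>: "strictly_positive \<rho>" and ab: "0 \<le> a" "0 \<le> b" "0 < a + b"
  shows "bij (lr_mult a b \<rho>)"
proof -
  have "linear (lr_mult a b \<rho>)"
    by (rule linearI) (simp_all add: lr_mult_add scaleR_eq_op_smult lr_mult_op_smult)
  with lr_mult_inj[OF assms] show ?thesis
    by (simp add: bij_def eucl.linear_inj_imp_surj)
qed

lemma lr_mult_ex1:
  assumes "strictly_positive \<rho>" "0 \<le> a" "0 \<le> b" "0 < a + b"
  shows "\<exists>!Y. lr_mult a b \<rho> Y = X"
  using lr_mult_bij[OF assms] by (simp add: bij_iff)

lemma the1_eq_iff: "\<exists>!x. P x \<Longrightarrow> (THE x. P x) = y \<longleftrightarrow> P y"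
  using theI'[of P] the1_equality[of P y] by blast

lemma comm_op_iff:
  assumes \<rho>: "strictly_positive \<rho>"
  shows "comm_op \<rho> X = Y \<longleftrightarrow> lr_mult 1 1 \<rho> Y = \<i> *: (X ** \<rho> - \<rho> ** X)"
proof -
  have "comm_op \<rho> X = (THE Y. lr_mult 1 1 \<rho> Y = \<i> *: (X ** \<rho> - \<rho> ** X))"
    by (simp add: comm_op_def lr_mult_def add.commute)
  then show ?thesis using the1_eq_iff[OF lr_mult_ex1[OF \<rho>]] by simp
qed

lemma comm_op_eq:
  "strictly_positive \<rho> \<Longrightarrow> lr_mult 1 1 \<rho> (comm_op \<rho> X) = \<i> *: (X ** \<rho> - \<rho> ** X)"
  using comm_op_iff by blast

lemma comm_op_add:
  "strictly_positive \<rho> \<Longrightarrow> comm_op \<rho> (X + Y) = comm_op \<rho> X + comm_op \<rho> Y"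
  by (simp add: comm_op_iff lr_mult_add comm_op_eq matrix_add_ldistrib matrix_add_rdistrib
      op_smult_add op_smult_diff algebra_simps)

lemma comm_op_op_smult:
  "strictly_positive \<rho> \<Longrightarrow> comm_op \<rho> (c *: X) = c *: comm_op \<rho> X"
  by (simp add: comm_op_iff lr_mult_op_smult comm_op_eq matrix_op_smult_left matrix_op_smult_right
      op_smult_op_smult op_smult_diff mult.commute)

lemma lr_mult_beta_shift:
  assumes "strictly_positive \<rho>"
  shows "lr_mult 1 1 \<rho> (Y + (complex_of_real \<beta> * \<i>) *: comm_op \<rho> Y) = lr_mult (1 + \<beta>) (1 - \<beta>) \<rho> Y"
proof -
  have "lr_mult 1 1 \<rho> (Y + (complex_of_real \<beta> * \<i>) *: comm_op \<rho> Y)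
      = lr_mult 1 1 \<rho> Y + (complex_of_real \<beta> * \<i>) *: (\<i> *: (Y ** \<rho> - \<rho> ** Y))"
    by (simp add: lr_mult_add lr_mult_op_smult comm_op_eq[OF assms])
  also have "\<dots> = lr_mult (1 + \<beta>) (1 - \<beta>) \<rho> Y"
    by (rule op_eqI) (simp add: lr_mult_def algebra_simps)
  finally show ?thesis .
qed

lemma beta_transform_ex1:
  assumes \<rho>: "strictly_positive \<rho>" and \<beta>: "\<bar>\<beta>\<bar> \<le> 1"
  shows "\<exists>!Y. Y + (complex_of_real \<beta> * \<i>) *: comm_op \<rho> Y = X"
proof -
  have "Y + (complex_of_real \<beta> * \<i>) *: comm_op \<rho> Y = X
      \<longleftrightarrow> lr_mult (1 + \<beta>) (1 - \<beta>) \<rho> Y = lr_mult 1 1 \<rho> X" for Y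
    using inj_eq[OF lr_mult_inj[OF \<rho>, of 1 1], of "Y + (complex_of_real \<beta> * \<i>) *: comm_op \<rho> Y" X]
    by (simp add: lr_mult_beta_shift[OF \<rho>])
  with lr_mult_ex1[OF \<rho>, of "1 + \<beta>" "1 - \<beta>"] \<beta> show ?thesis by simp
qed

lemma beta_transform_iff:
  assumes "strictly_positive \<rho>" "\<bar>\<beta>\<bar> \<le> 1"
  shows "beta_transform \<beta> \<rho> X = Y \<longleftrightarrow> Y + (complex_of_real \<beta> * \<i>) *: comm_op \<rho> Y = X"
  unfolding beta_transform_def by (rule the1_eq_iff[OF beta_transform_ex1[OF assms]])

lemma beta_transform_eq:
  assumes "strictly_positive \<rho>" "\<bar>\<beta>\<bar> \<le> 1"
  shows "beta_transform \<beta> \<rho> X + (complex_of_real \<beta> * \<i>) *: comm_op \<rho> (beta_transform \<beta> \<rho> X) = X"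
  using beta_transform_iff[OF assms] by blast

lemma lr_mult_beta_transform:
  assumes "strictly_positive \<rho>" "\<bar>\<beta>\<bar> \<le> 1"
  shows "lr_mult (1 + \<beta>) (1 - \<beta>) \<rho> (beta_transform \<beta> \<rho> X) = lr_mult 1 1 \<rho> X"
  by (metis lr_mult_beta_shift[OF assms(1)] beta_transform_eq[OF assms])

lemma beta_transform_add:
  assumes "strictly_positive \<rho>" "\<bar>\<beta>\<bar> \<le> 1"
  shows "beta_transform \<beta> \<rho> (X + Y) = beta_transform \<beta> \<rho> X + beta_transform \<beta> \<rho> Y"
proof -
  let ?T = "beta_transform \<beta> \<rho>" and ?c = "complex_of_real \<beta> * \<i>"
  have "?T X + ?T Y + ?c *: comm_op \<rho> (?T X + ?T Y)
      = (?T X + ?c *: comm_op \<rho> (?T X)) + (?T Y + ?c *: comm_op \<rho> (?T Y))"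
    by (simp add: comm_op_add[OF assms(1)] op_smult_add algebra_simps)
  then show ?thesis by (simp add: beta_transform_iff[OF assms] beta_transform_eq[OF assms])
qed

lemma beta_transform_op_smult:
  assumes "strictly_positive \<rho>" "\<bar>\<beta>\<bar> \<le> 1"
  shows "beta_transform \<beta> \<rho> (c *: X) = c *: beta_transform \<beta> \<rho> X"
  using arg_cong[OF beta_transform_eq[OF assms, of X], of "(*:) c"]
  by (simp add: beta_transform_iff[OF assms] comm_op_op_smult[OF assms(1)] op_smult_add
      op_smult_op_smult mult.commute)

lemma beta_transform_sum:
  assumes "strictly_positive \<rho>" "\<bar>\<beta>\<bar> \<le> 1"
  shows "beta_transform \<beta> \<rho> (\<Sum>j\<in>S. c j *: X j) = (\<Sum>j\<in>S. c j *: beta_transform \<beta> \<rho> (X j))"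
  by (rule sum_op_smult_map)
    (simp_all add: beta_transform_add[OF assms] beta_transform_op_smult[OF assms])

lemma beta_transform_comm_op:
  assumes "strictly_positive \<rho>" "\<bar>\<beta>\<bar> \<le> 1"
  shows "beta_transform \<beta> \<rho> (comm_op \<rho> X) = comm_op \<rho> (beta_transform \<beta> \<rho> X)"
  using arg_cong[OF beta_transform_eq[OF assms, of X], of "comm_op \<rho>"]
  by (simp add: beta_transform_iff[OF assms] comm_op_add[OF assms(1)] comm_op_op_smult[OF assms(1)])

lemma beta_transform_eq_0_iff:
  assumes "strictly_positive \<rho>" "\<bar>\<beta>\<bar> \<le> 1"
  shows "beta_transform \<beta> \<rho> X = 0 \<longleftrightarrow> X = 0"
  using comm_op_op_smult[OF assms(1), of 0 0] by (auto simp: beta_transform_iff[OF assms])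

lemma beta_logder_iff:
  assumes \<rho>: "strictly_positive \<rho>" and \<beta>: "\<bar>\<beta>\<bar> \<le> 1"
  shows "beta_logder \<beta> \<rho> dR = L \<longleftrightarrow> lr_mult ((1 + \<beta>) / 2) ((1 - \<beta>) / 2) \<rho> L = dR"
proof -
  have "beta_logder \<beta> \<rho> dR = (THE L. lr_mult ((1 + \<beta>) / 2) ((1 - \<beta>) / 2) \<rho> L = dR)"
    by (simp add: beta_logder_def lr_mult_def eq_commute)
  moreover have "\<exists>!L. lr_mult ((1 + \<beta>) / 2) ((1 - \<beta>) / 2) \<rho> L = dR"
    by (rule lr_mult_ex1[OF \<rho>]) (use \<beta> in \<open>auto simp: abs_le_iff field_simps\<close>)
  ultimately show ?thesis by (simp add: the1_eq_iff)
qed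

lemma beta_logder_eq_beta_transform_SLD:
  assumes \<rho>: "strictly_positive \<rho>" and \<beta>: "\<bar>\<beta>\<bar> \<le> 1"
  shows "beta_logder \<beta> \<rho> dR = beta_transform \<beta> \<rho> (SLD \<rho> dR)"
proof -
  have "lr_mult ((1 + \<beta>) / 2) ((1 - \<beta>) / 2) \<rho> (beta_transform \<beta> \<rho> (SLD \<rho> dR))
      = (1 / 2) *: lr_mult 1 1 \<rho> (SLD \<rho> dR)"
    by (simp add: lr_mult_half lr_mult_beta_transform[OF \<rho> \<beta>])
  also have "\<dots> = lr_mult ((1 + 0) / 2) ((1 - 0) / 2) \<rho> (SLD \<rho> dR)"
    using lr_mult_half[of 0 \<rho> "SLD \<rho> dR"] by simp
  also have "\<dots> = dR"
    using beta_logder_iff[OF \<rho>, of 0 dR "SLD \<rho> dR"] by simp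
  finally show ?thesis by (simp add: beta_logder_iff[OF \<rho> \<beta>])
qed

lemma beta_ip_eq_hs_inner:
  "beta_ip \<beta> \<rho> X Y = 1 / 2 * hs_inner X (lr_mult (1 + \<beta>) (1 - \<beta>) \<rho> Y)"
  by (simp add: beta_ip_def hs_inner_def lr_mult_def)

lemma beta_ip_beta_transform_right:
  assumes "strictly_positive \<rho>" "\<bar>\<beta>\<bar> \<le> 1"
  shows "beta_ip \<beta> \<rho> X (beta_transform \<beta> \<rho> Y) = beta_ip 0 \<rho> X Y"
  by (simp add: beta_ip_eq_hs_inner lr_mult_beta_transform[OF assms])

lemma beta_ip_sum_right:
  "beta_ip \<beta> \<rho> X (\<Sum>j\<in>S. c j *: Y j) = (\<Sum>j\<in>S. c j * beta_ip \<beta> \<rho> X (Y j))"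
  by (simp add: beta_ip_eq_hs_inner lr_mult_sum hs_inner_sum_right hs_inner_op_smult_right
      sum_distrib_left algebra_simps)

lemma beta_ip_sum_left:
  "beta_ip \<beta> \<rho> (\<Sum>j\<in>S. c j *: X j) Y = (\<Sum>j\<in>S. cnj (c j) * beta_ip \<beta> \<rho> (X j) Y)"
  by (simp add: beta_ip_eq_hs_inner hs_inner_sum_left hs_inner_op_smult_left
      sum_distrib_left algebra_simps)

lemma beta_ip_self_eq_0_iff:
  assumes "strictly_positive \<rho>" "\<bar>\<beta>\<bar> \<le> 1"
  shows "beta_ip \<beta> \<rho> X X = 0 \<longleftrightarrow> X = 0"
proof
  assume "beta_ip \<beta> \<rho> X X = 0"
  then show "X = 0"
    using lr_mult_pos[OF assms(1), of "1 + \<beta>" "1 - \<beta>" X] assms(2)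
    by (auto simp: beta_ip_eq_hs_inner abs_le_iff)
qed (simp add: beta_ip_def trace_def)

lemma beta_ip_gram_injective:
  assumes \<rho>: "strictly_positive \<rho>" and \<beta>: "\<bar>\<beta>\<bar> \<le> 1"
    and indep: "\<And>c. (\<Sum>j<m. c j *: X j) = 0 \<Longrightarrow> \<forall>j<m. c j = 0"
    and v: "v \<in> carrier_vec m"
    and Gv: "mat m m (\<lambda>(i, j). beta_ip \<beta> \<rho> (X i) (X j)) *\<^sub>v v = 0\<^sub>v m"
  shows "v = 0\<^sub>v m"
proof -
  define Z where "Z = (\<Sum>j<m. vec_index v j *: X j)"
  have XZ: "beta_ip \<beta> \<rho> (X i) Z = 0" if "i < m" for i
  proof -
    have "vec_index (mat m m (\<lambda>(i, j). beta_ip \<beta> \<rho> (X i) (X j)) *\<^sub>v v) i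
        = (\<Sum>j<m. beta_ip \<beta> \<rho> (X i) (X j) * vec_index v j)"
      using v that by (simp add: scalar_prod_def atLeast0LessThan)
    also have "\<dots> = beta_ip \<beta> \<rho> (X i) Z"
      by (simp add: Z_def beta_ip_sum_right mult.commute)
    finally show ?thesis using Gv that by simp
  qed
  have "beta_ip \<beta> \<rho> Z Z = (\<Sum>j<m. cnj (vec_index v j) * beta_ip \<beta> \<rho> (X j) Z)"
    by (subst (1) Z_def) (rule beta_ip_sum_left)
  also have "\<dots> = 0" using XZ by simp
  finally have "beta_ip \<beta> \<rho> Z Z = 0" .
  then have "Z = 0" using beta_ip_self_eq_0_iff[OF \<rho> \<beta>] by blast
  then show ?thesis using indep[of "vec_index v"] v by (intro eq_vecI) (auto simp: Z_def)
qed

lemma trace_hermitian_cnj: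
  assumes "hermitian_op \<rho>" "hermitian_op X" "hermitian_op Y"
  shows "cnj (trace (\<rho> ** X ** Y)) = trace (\<rho> ** Y ** X)"
proof -
  have "cnj (trace (\<rho> ** X ** Y)) = trace (Y ** X ** \<rho>)"
    using assms
    by (simp add: trace_op_adj[symmetric] op_adj_matrix_mult hermitian_op_def matrix_mul_assoc)
  also have "\<dots> = trace (\<rho> ** Y ** X)"
    using trace_mul_sym[of "Y ** X" \<rho>] by (simp add: matrix_mul_assoc)
  finally show ?thesis .
qed

lemma beta_ip_0_hermitian:
  assumes "hermitian_op \<rho>" "hermitian_op X" "hermitian_op Y"
  shows "beta_ip 0 \<rho> X Y = complex_of_real (Re (trace (\<rho> ** Y ** X)))"
proof -
  have "beta_ip 0 \<rho> X Y = (trace (X ** \<rho> ** Y) + trace (X ** Y ** \<rho>)) / 2"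
    using assms(2)
    by (simp add: beta_ip_def hermitian_op_def matrix_add_ldistrib trace_add matrix_mul_assoc)
  also have "trace (X ** \<rho> ** Y) = trace (\<rho> ** Y ** X)" by (metis trace_mul_sym matrix_mul_assoc)
  also have "trace (X ** Y ** \<rho>) = cnj (trace (\<rho> ** Y ** X))"
    using trace_hermitian_cnj[OF assms(1,3,2)] trace_mul_sym[of "X ** Y" \<rho>]
    by (simp add: matrix_mul_assoc)
  finally show ?thesis by (simp add: complex_add_cnj)
qed

lemma beta_ip_0_comm_op:
  assumes \<rho>: "strictly_positive \<rho>" and XY: "hermitian_op X" "hermitian_op Y"
  shows "beta_ip 0 \<rho> X (comm_op \<rho> Y) = complex_of_real (Im (trace (\<rho> ** Y ** X)))"
proof -
  have "beta_ip 0 \<rho> X (comm_op \<rho> Y) = \<i> * (trace (X ** Y ** \<rho>) - trace (X ** \<rho> ** Y)) / 2"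
    using XY(1) by (simp add: beta_ip_eq_hs_inner comm_op_eq[OF \<rho>] hs_inner_def hermitian_op_def
        matrix_op_smult_right trace_op_smult matrix_diff_ldistrib trace_sub matrix_mul_assoc)
  also have "trace (X ** \<rho> ** Y) = trace (\<rho> ** Y ** X)" by (metis trace_mul_sym matrix_mul_assoc)
  also have "trace (X ** Y ** \<rho>) = cnj (trace (\<rho> ** Y ** X))"
    using \<rho> trace_hermitian_cnj[OF _ XY(2,1)] trace_mul_sym[of "X ** Y" \<rho>]
    by (simp add: strictly_positive_def matrix_mul_assoc)
  finally show ?thesis by (simp add: complex_eq_iff)
qed

text \<open>Split a vanishing complex combination into its Hermitian and skew-Hermitian parts.\<close>

lemma hermitian_independent_complex:
  assumes herm: "\<And>j. j < r \<Longrightarrow> hermitian_op (D j)"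
    and indep: "\<And>c. (\<Sum>j<r. c j *\<^sub>R D j) = 0 \<Longrightarrow> \<forall>j<r. c j = 0"
    and zero: "(\<Sum>j<r. v j *: D j) = 0"
  shows "\<forall>j<r. v j = 0"
proof -
  have Re_eq: "complex_of_real (Re z) = (z + cnj z) / 2"
    and Im_eq: "complex_of_real (Im z) = (z - cnj z) / (2 * \<i>)" for z
    by (simp_all add: complex_eq_iff)
  have "op_adj (\<Sum>j<r. v j *: D j) = (\<Sum>j<r. cnj (v j) *: D j)"
    unfolding op_adj_sum op_adj_op_smult using herm by (intro sum.cong) (auto simp: hermitian_op_def)
  then have cnj_zero: "(\<Sum>j<r. cnj (v j) *: D j) = 0" using zero by simp
  have "(\<Sum>j<r. Re (v j) *\<^sub>R D j) = (1 / 2) *: ((\<Sum>j<r. v j *: D j) + (\<Sum>j<r. cnj (v j) *: D j))"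
    by (rule op_eqI) (simp add: scaleR_eq_op_smult Re_eq sum_distrib_left
        sum.distrib[symmetric] algebra_simps add_divide_distrib)
  then have "\<forall>j<r. Re (v j) = 0" using indep zero cnj_zero by simp
  moreover have "(\<Sum>j<r. Im (v j) *\<^sub>R D j)
      = (1 / (2 * \<i>)) *: ((\<Sum>j<r. v j *: D j) - (\<Sum>j<r. cnj (v j) *: D j))"
    by (rule op_eqI) (simp add: scaleR_eq_op_smult Im_eq sum_distrib_left
        sum_subtractf[symmetric] algebra_simps diff_divide_distrib)
  then have "\<forall>j<r. Im (v j) = 0" using indep zero cnj_zero by simp
  ultimately show ?thesis by (simp add: complex_eq_iff)
qed

lemma mat_inverse_eqI:
  fixes A B :: "'a::field mat"
  assumes A: "A \<in> carrier_mat n n" and B: "B \<in> carrier_mat n n" and AB: "A * B = 1\<^sub>m n"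
  shows "mat_inverse A = Some B"
proof -
  have BA: "B * A = 1\<^sub>m n" by (rule mat_mult_left_right_inverse[OF A B AB])
  then have "A \<in> Units (ring_mat TYPE('a) n ())"
    using A B AB unfolding Units_def ring_mat_def by auto
  with mat_inverse(1)[OF A] obtain C where C: "mat_inverse A = Some C" by fastforce
  with mat_inverse(2)[OF A] have AC: "A * C = 1\<^sub>m n" and "C \<in> carrier_mat n n" by auto
  then have "C = (B * A) * C" by (simp add: BA)
  also have "\<dots> = B" using A B \<open>C \<in> carrier_mat n n\<close> by (simp add: AC)
  finally show ?thesis using C by simp
qed

lemma mat_inverse_ne_None_if_inj:
  fixes A :: "'a::field mat"
  assumes A: "A \<in> carrier_mat n n"
    and inj: "\<And>v. v \<in> carrier_vec n \<Longrightarrow> A *\<^sub>v v = 0\<^sub>v n \<Longrightarrow> v = 0\<^sub>v n"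
  shows "mat_inverse A \<noteq> None"
proof -
  have "Determinant.det A \<noteq> 0" using det_0_iff_vec_prod_zero[OF A] inj by auto
  then have "A \<in> Units (ring_mat TYPE('a) n ())" by (rule det_non_zero_imp_unit[OF A])
  then show ?thesis using mat_inverse(1)[OF A, of "()"] by blast
qed

lemma add_eq_0_mat_iff:
  fixes A B :: "'a::group_add mat"
  assumes "A \<in> carrier_mat n m" "B \<in> carrier_mat n m"
  shows "A + B = 0\<^sub>m n m \<longleftrightarrow> A = - B"
  using assms by (auto simp: mat_eq_iff eq_neg_iff_add_eq_0)

lemma schur_complement_inverse_blocks:
  fixes M1 M2 M3 M4 P1 P2 P3 P4 :: "'a::field mat"
  assumes M: "M1 \<in> carrier_mat d d" "M2 \<in> carrier_mat d e" "M3 \<in> carrier_mat e d" "M4 \<in> carrier_mat e e"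
    and P: "P1 \<in> carrier_mat d d" "P2 \<in> carrier_mat d e" "P3 \<in> carrier_mat e d" "P4 \<in> carrier_mat e e"
    and E1: "M1 * P1 + M2 * P3 = 1\<^sub>m d" and E2: "M1 * P2 + M2 * P4 = 0\<^sub>m d e"
    and E4: "M3 * P2 + M4 * P4 = 1\<^sub>m e"
    and M1: "mat_inverse M1 \<noteq> None"
  shows "\<exists>Q. mat_inverse P4 = Some Q \<and> mat_inverse M1 = Some (P1 - P2 * Q * P3)"
proof -
  obtain N where "mat_inverse M1 = Some N" using M1 by auto
  with mat_inverse(2)[OF M(1)] have NM1: "N * M1 = 1\<^sub>m d" and N: "N \<in> carrier_mat d d" by auto
  have M1P2: "M1 * P2 = - (M2 * P4)" using E2 M P by (simp add: add_eq_0_mat_iff)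
  define Q where "Q = M4 - M3 * N * M2"
  have Q: "Q \<in> carrier_mat e e" using M N by (simp add: Q_def minus_carrier_mat)
  have "Q * P4 = M4 * P4 - M3 * N * (M2 * P4)"
    using M N P by (simp add: Q_def minus_mult_distrib_mat[of _ e e] minus_carrier_mat
        flip: assoc_mult_mat[of "M3 * N" e d M2 e P4 e])
  also have "M3 * N * (M2 * P4) = - (M3 * P2)"
  proof -
    have "P2 = N * (M1 * P2)" using M N P by (simp flip: assoc_mult_mat[of N d d M1 d P2 e] add: NM1)
    then show ?thesis
      using M N P by (simp add: M1P2 assoc_mult_mat[of M3 e d N d "M2 * P4" e])
  qed
  also have "M4 * P4 - - (M3 * P2) = 1\<^sub>m e"
    using E4 M P by (simp add: mat_eq_iff add.commute)
  finally have "P4 * Q = 1\<^sub>m e" by (rule mat_mult_left_right_inverse[OF Q P(4)])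
  then have P4_inv: "mat_inverse P4 = Some Q" by (rule mat_inverse_eqI[OF P(4) Q])
  have "M1 * (P1 - P2 * Q * P3) = M1 * P1 - M1 * (P2 * (Q * P3))"
    using M P Q by (simp add: mult_minus_distrib_mat[of _ d d])
  also have "M1 * (P2 * (Q * P3)) = - (M2 * (P4 * Q * P3))"
    using M P Q by (simp add: M1P2 assoc_mult_mat[of M2 d e P4 e "Q * P3" d]
        flip: assoc_mult_mat[of M1 d d P2 e "Q * P3" d])
  also have "M1 * P1 - - (M2 * (P4 * Q * P3)) = 1\<^sub>m d"
    using E1 M P by (simp add: \<open>P4 * Q = 1\<^sub>m e\<close> mat_eq_iff)
  finally have "mat_inverse M1 = Some (P1 - P2 * Q * P3)"
    using mat_inverse_eqI[OF M(1)] P Q by (simp add: minus_carrier_mat)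
  with P4_inv show ?thesis by blast
qed

lemma split_block_four_block_mat:
  assumes "A1 \<in> carrier_mat n1 m1" "A2 \<in> carrier_mat n1 m2" "A3 \<in> carrier_mat n2 m1" "A4 \<in> carrier_mat n2 m2"
  shows "split_block (four_block_mat A1 A2 A3 A4) n1 m1 = (A1, A2, A3, A4)"
  using assms by (auto simp: split_block_def Let_def intro!: eq_matI)

lemma schur_complement_inverse:
  fixes M P :: "'a::field mat"
  assumes M: "M \<in> carrier_mat (d + e) (d + e)" and P: "P \<in> carrier_mat (d + e) (d + e)"
    and MP: "M * P = 1\<^sub>m (d + e)"
    and split_M: "split_block M d d = (M1, M2, M3, M4)"
    and split_P: "split_block P d d = (P1, P2, P3, P4)"
    and M1: "mat_inverse M1 \<noteq> None"
  shows "\<exists>Q. mat_inverse P4 = Some Q \<and> mat_inverse M1 = Some (P1 - P2 * Q * P3)"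
proof -
  note Mb = split_block[OF split_M carrier_matD[OF M]]
    and Pb = split_block[OF split_P carrier_matD[OF P]]
  have "four_block_mat (M1 * P1 + M2 * P3) (M1 * P2 + M2 * P4) (M3 * P1 + M4 * P3) (M3 * P2 + M4 * P4)
      = four_block_mat (1\<^sub>m d) (0\<^sub>m d e) (0\<^sub>m e d) (1\<^sub>m e)"
    using MP M P Mb Pb by (simp add: mult_four_block_mat)
  then have "split_block (four_block_mat (M1 * P1 + M2 * P3) (M1 * P2 + M2 * P4) (M3 * P1 + M4 * P3)
      (M3 * P2 + M4 * P4)) d d = split_block (four_block_mat (1\<^sub>m d) (0\<^sub>m d e) (0\<^sub>m e d) (1\<^sub>m e)) d d"
    by (rule arg_cong)
  then have "M1 * P1 + M2 * P3 = 1\<^sub>m d \<and> M1 * P2 + M2 * P4 = 0\<^sub>m d e \<and> M3 * P2 + M4 * P4 = 1\<^sub>m e"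
    using Mb Pb by (simp add: split_block_four_block_mat[of _ d d _ e _ e] del: four_block_one_mat)
  then show ?thesis
    using schur_complement_inverse_blocks[OF Mb(1-4) Pb(1-4) _ _ _ M1] M P by auto
qed

lemma dim_row_adjM [simp]: "dim_row (adjM A) = dim_col A"
  by (simp add: adjM_def)

lemma dim_col_adjM [simp]: "dim_col (adjM A) = dim_row A"
  by (simp add: adjM_def)

lemma index_adjM [simp]: "i < dim_col A \<Longrightarrow> j < dim_row A \<Longrightarrow> adjM A $$ (i, j) = cnj (A $$ (j, i))"
  by (simp add: adjM_def)

lemma adjM_carrier_mat [simp]: "A \<in> carrier_mat n m \<Longrightarrow> adjM A \<in> carrier_mat m n"
  by (rule carrier_matI) auto

lemma adjM_one [simp]: "adjM (1\<^sub>m n) = 1\<^sub>m n"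
  by (rule eq_matI) simp_all

lemma index_mult_mat_sum:
  assumes "A \<in> carrier_mat n m" "B \<in> carrier_mat m p" "i < n" "j < p"
  shows "(A * B) $$ (i, j) = (\<Sum>k<m. A $$ (i, k) * B $$ (k, j))"
  using assms by (simp add: scalar_prod_def atLeast0LessThan)

lemma adjM_mult:
  assumes A: "A \<in> carrier_mat n m" and B: "B \<in> carrier_mat m p"
  shows "adjM (A * B) = adjM B * adjM A"
proof (rule eq_matI)
  fix i j assume "i < dim_row (adjM B * adjM A)" "j < dim_col (adjM B * adjM A)"
  with A B have ij: "i < p" "j < n" by auto
  with A B have "adjM (A * B) $$ (i, j) = cnj ((A * B) $$ (j, i))" by (intro index_adjM) auto
  with A B ij show "adjM (A * B) $$ (i, j) = (adjM B * adjM A) $$ (i, j)"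
    by (simp add: index_mult_mat_sum[of _ p m _ n] index_mult_mat_sum[OF A B] mult.commute
        del: index_mult_mat)
qed (use A B in auto)

lemma adjM_ReM: "adjM (ReM A) = ReM (adjM A)"
  by (rule eq_matI) (simp_all add: ReM_def adjM_def)

lemma adjM_ImM: "adjM (ImM A) = - ImM (adjM A)"
  by (rule eq_matI) (simp_all add: ImM_def adjM_def)

lemma adjM_beta_part: "adjM (beta_part \<beta> A) = beta_part \<beta> (adjM A)"
  by (rule eq_matI) (simp_all add: beta_part_def ReM_def ImM_def adjM_def)

lemma ReM_ReM [simp]: "ReM (ReM A) = ReM A"
  by (rule eq_matI) (simp_all add: ReM_def)

lemma ReM_one [simp]: "ReM (1\<^sub>m n) = 1\<^sub>m n"
  by (rule eq_matI) (simp_all add: ReM_def)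

lemma map_mat_mult_real_left:
  assumes f: "linear f" and H: "ReM H = H" "H \<in> carrier_mat n m" and X: "X \<in> carrier_mat m p"
  shows "map_mat f (H * X) = H * map_mat f X"
proof (rule eq_matI)
  fix i j assume "i < dim_row (H * map_mat f X)" "j < dim_col (H * map_mat f X)"
  then have ij: "i < n" "j < p" using H(2) X by auto
  have real: "H $$ (i, k) = complex_of_real (Re (H $$ (i, k)))" if "k < m" for k
    using H ij that by (metis ReM_def carrier_matD index_map_mat(1))
  have "map_mat f (H * X) $$ (i, j) = f ((H * X) $$ (i, j))"
    using H(2) X ij by (intro index_map_mat) auto
  also have "\<dots> = f (\<Sum>k<m. H $$ (i, k) * X $$ (k, j))"
    by (simp only: index_mult_mat_sum[OF H(2) X ij])
  also have "\<dots> = f (\<Sum>k<m. Re (H $$ (i, k)) *\<^sub>R X $$ (k, j))"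
    using real by (simp add: scaleR_conv_of_real)
  also have "\<dots> = (\<Sum>k<m. Re (H $$ (i, k)) *\<^sub>R f (X $$ (k, j)))"
    by (simp add: linear_sum[OF f] linear_scale[OF f])
  also have "\<dots> = (\<Sum>k<m. H $$ (i, k) * f (X $$ (k, j)))"
    using real by (simp add: scaleR_conv_of_real)
  also have "\<dots> = (H * map_mat f X) $$ (i, j)"
    using H(2) X ij by (simp add: index_mult_mat_sum[OF H(2), of "map_mat f X" p] del: index_mult_mat)
  finally show "map_mat f (H * X) $$ (i, j) = (H * map_mat f X) $$ (i, j)" .
qed (use H X in auto)

lemma map_mat_mult_real_right:
  assumes f: "linear f" and X: "X \<in> carrier_mat n m" and H: "ReM H = H" "H \<in> carrier_mat m p"
  shows "map_mat f (X * H) = map_mat f X * H"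
proof (rule eq_matI)
  fix i j assume "i < dim_row (map_mat f X * H)" "j < dim_col (map_mat f X * H)"
  then have ij: "i < n" "j < p" using H(2) X by auto
  have real: "H $$ (k, j) = complex_of_real (Re (H $$ (k, j)))" if "k < m" for k
    using H ij that by (metis ReM_def carrier_matD index_map_mat(1))
  have "map_mat f (X * H) $$ (i, j) = f ((X * H) $$ (i, j))"
    using H(2) X ij by (intro index_map_mat) auto
  also have "\<dots> = f (\<Sum>k<m. X $$ (i, k) * H $$ (k, j))"
    by (simp only: index_mult_mat_sum[OF X H(2) ij])
  also have "\<dots> = f (\<Sum>k<m. Re (H $$ (k, j)) *\<^sub>R X $$ (i, k))"
    using real by (simp add: scaleR_conv_of_real mult.commute)
  also have "\<dots> = (\<Sum>k<m. Re (H $$ (k, j)) *\<^sub>R f (X $$ (i, k)))"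
    by (simp add: linear_sum[OF f] linear_scale[OF f])
  also have "\<dots> = (\<Sum>k<m. f (X $$ (i, k)) * H $$ (k, j))"
    using real by (simp add: scaleR_conv_of_real mult.commute)
  also have "\<dots> = (map_mat f X * H) $$ (i, j)"
    using H(2) X ij by (simp add: index_mult_mat_sum[OF _ H(2), of "map_mat f X" n] del: index_mult_mat)
  finally show "map_mat f (X * H) $$ (i, j) = (map_mat f X * H) $$ (i, j)" .
qed (use H X in auto)

lemma linear_of_real_Re: "linear (\<lambda>z. complex_of_real (Re z))"
  and linear_of_real_Im: "linear (\<lambda>z. complex_of_real (Im z))"
  by (auto intro!: linearI simp: scaleR_conv_of_real)

lemma real_mat_inverse:
  assumes G: "ReM G = G" "G \<in> carrier_mat n n" and H: "H \<in> carrier_mat n n" and GH: "G * H = 1\<^sub>m n"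
  shows "ReM H = H"
proof -
  have "G * ReM H = 1\<^sub>m n"
    using map_mat_mult_real_left[OF linear_of_real_Re G H, folded ReM_def] GH by simp
  then have "mat_inverse G = Some (ReM H)" using mat_inverse_eqI[OF G(2)] H by (simp add: ReM_def)
  with mat_inverse_eqI[OF G(2) H GH] show ?thesis by simp
qed

lemma hermitian_mat_inverse:
  assumes G: "adjM G = G" "G \<in> carrier_mat n n" and H: "H \<in> carrier_mat n n" and GH: "G * H = 1\<^sub>m n"
  shows "adjM H = H"
proof -
  have "adjM H * G = 1\<^sub>m n" using adjM_mult[OF G(2) H] G GH by simp
  then have "G * adjM H = 1\<^sub>m n" by (rule mat_mult_left_right_inverse[OF adjM_carrier_mat[OF H] G(2)])
  then have "mat_inverse G = Some (adjM H)" using mat_inverse_eqI[OF G(2)] H by simp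
  with mat_inverse_eqI[OF G(2) H GH] show ?thesis by simp
qed

lemma ReM_carrier_mat [simp]: "ReM A \<in> carrier_mat n m \<longleftrightarrow> A \<in> carrier_mat n m"
  and ImM_carrier_mat [simp]: "ImM A \<in> carrier_mat n m \<longleftrightarrow> A \<in> carrier_mat n m"
  by (simp_all add: ReM_def ImM_def)

lemma ReM_ImM_mult_real:
  assumes H: "ReM H = H" "H \<in> carrier_mat n m" and X: "X \<in> carrier_mat m p"
    and K: "ReM K = K" "K \<in> carrier_mat p q"
  shows "ReM (H * X * K) = H * ReM X * K" and "ImM (H * X * K) = H * ImM X * K"
  using map_mat_mult_real_right[OF linear_of_real_Re _ K, of "H * X" n]
    map_mat_mult_real_left[OF linear_of_real_Re H X]
    map_mat_mult_real_right[OF linear_of_real_Im _ K, of "H * X" n]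
    map_mat_mult_real_left[OF linear_of_real_Im H X] H X
  by (simp_all add: ReM_def ImM_def)

lemma skew_commute_inverse:
  fixes G H A B :: "'a::field mat"
  assumes G: "G \<in> carrier_mat n n" and H: "H \<in> carrier_mat n n" and GH: "G * H = 1\<^sub>m n" "H * G = 1\<^sub>m n"
    and A: "A \<in> carrier_mat n n" and B: "B \<in> carrier_mat n n" and skew: "B * G = - (G * A)"
  shows "H * B = - (A * H)"
proof -
  have "H * (B * G) * H = H * (B * (G * H))"
    using assoc_mult_mat[OF H mult_carrier_mat[OF B G] H] assoc_mult_mat[OF B G H] by simp
  then have "H * B = H * (B * G) * H" by (simp add: GH right_mult_one_mat[OF B])
  also have "\<dots> = - (H * (G * A) * H)" using A G H by (simp add: skew)
  also have "H * (G * A) * H = A * H"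
    using G H A by (simp add: GH flip: assoc_mult_mat[of H n n G n A n])
  finally show ?thesis .
qed

lemma mat_inverse_beta_part:
  fixes \<Sigma> A Jt :: "complex mat"
  assumes \<Sigma>: "\<Sigma> \<in> carrier_mat r r" and herm: "adjM \<Sigma> = \<Sigma>"
    and H: "mat_inverse (ReM \<Sigma>) = Some H"
    and A: "A \<in> carrier_mat r r" and Im_\<Sigma>: "ImM \<Sigma> = ReM \<Sigma> * A"
    and Jt: "Jt \<in> carrier_mat r r"
    and gram: "(1\<^sub>m r - (complex_of_real \<beta> * \<i>) \<cdot>\<^sub>m adjM A) * Jt = ReM \<Sigma>"
  shows "mat_inverse Jt = Some (beta_part \<beta> (H * \<Sigma> * H))"
    and "adjM (beta_part \<beta> (H * \<Sigma> * H)) = beta_part \<beta> (H * \<Sigma> * H)"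
proof -
  define G where "G = ReM \<Sigma>"
  define K where "K = 1\<^sub>m r - (complex_of_real \<beta> * \<i>) \<cdot>\<^sub>m adjM A"
  have G: "G \<in> carrier_mat r r" using \<Sigma> by (simp add: G_def)
  have A': "adjM A \<in> carrier_mat r r" using A by simp
  have K: "K \<in> carrier_mat r r" using A by (simp add: K_def minus_carrier_mat)
  from mat_inverse(2)[OF G H[folded G_def]]
  have GH: "G * H = 1\<^sub>m r" "H * G = 1\<^sub>m r" and Hc: "H \<in> carrier_mat r r" by auto
  have G_herm: "adjM G = G" by (simp add: G_def adjM_ReM herm)
  have H_real: "ReM H = H" by (rule real_mat_inverse[OF _ G Hc GH(1)]) (simp add: G_def)
  have H_herm: "adjM H = H" by (rule hermitian_mat_inverse[OF G_herm G Hc GH(1)])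
  have "adjM A * G = - (G * A)"
    using adjM_mult[OF G A] adjM_ImM[of \<Sigma>] by (simp add: G_herm herm Im_\<Sigma> G_def[symmetric])
  then have HA: "H * adjM A = - (A * H)" by (rule skew_commute_inverse[OF G Hc GH A A'])
  have "beta_part \<beta> (H * \<Sigma> * H) = H + (complex_of_real \<beta> * \<i>) \<cdot>\<^sub>m (A * H)"
    using ReM_ImM_mult_real[OF H_real Hc \<Sigma> H_real Hc] Hc G A
    by (simp add: beta_part_def G_def[symmetric] Im_\<Sigma> GH flip: assoc_mult_mat[of H r r G r A r])
  also have "\<dots> = H * K"
    unfolding K_def using mult_minus_distrib_mat[OF Hc one_carrier_mat smult_carrier_mat[OF A']]
      mult_smult_distrib[OF Hc A'] Hc A by (simp add: HA mat_eq_iff)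
  finally have P: "beta_part \<beta> (H * \<Sigma> * H) = H * K" .
  have "H * K * Jt = 1\<^sub>m r"
    using Hc K Jt gram by (simp add: K_def[symmetric] G_def[symmetric] GH)
  then have "Jt * (H * K) = 1\<^sub>m r" using mat_mult_left_right_inverse[OF _ Jt] Hc K by simp
  then show "mat_inverse Jt = Some (beta_part \<beta> (H * \<Sigma> * H))"
    unfolding P using mat_inverse_eqI[OF Jt] Hc K by simp
  show "adjM (beta_part \<beta> (H * \<Sigma> * H)) = beta_part \<beta> (H * \<Sigma> * H)"
    using adjM_mult[of "H * \<Sigma>" r r H r] adjM_mult[OF Hc \<Sigma>] Hc \<Sigma>
    by (simp add: adjM_beta_part H_herm herm)
qed

lemma split_block_hermitian_beta_part:
  assumes R: "R \<in> carrier_mat (d + e) (d + e)" and herm: "adjM (beta_part \<beta> R) = beta_part \<beta> R"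
  shows "split_block (beta_part \<beta> R) d d =
    (beta_part \<beta> (mat d d (\<lambda>(i, j). R $$ (i, j))),
     adjM (beta_part \<beta> (mat e d (\<lambda>(i, j). R $$ (d + i, j)))),
     beta_part \<beta> (mat e d (\<lambda>(i, j). R $$ (d + i, j))),
     beta_part \<beta> (mat e e (\<lambda>(i, j). R $$ (d + i, d + j))))"
proof -
  have "beta_part \<beta> R $$ (i, j + d) = cnj (beta_part \<beta> R $$ (j + d, i))" if "i < d" "j < e" for i j
    using that R arg_cong[OF herm, of "\<lambda>M. M $$ (i, j + d)"] by (simp add: beta_part_def ReM_def ImM_def)
  then show ?thesis
    using R by (auto simp: split_block_def Let_def beta_part_def ReM_def ImM_def add.commute)
qed

locale invariant_extension =
  fixes \<rho> :: "'n::finite op" and r :: nat and D :: "nat \<Rightarrow> 'n op"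
  assumes strictly_positive: "strictly_positive \<rho>"
    and hermitian: "\<And>j. j < r \<Longrightarrow> hermitian_op (D j)"
    and real_independent: "\<And>c. (\<Sum>j<r. c j *\<^sub>R D j) = 0 \<Longrightarrow> \<forall>j<r. c j = 0"
    and comm_op_closed: "\<And>c. \<exists>c'. comm_op \<rho> (\<Sum>j<r. c j *\<^sub>R D j) = (\<Sum>j<r. c' j *\<^sub>R D j)"
begin

definition sigma_mat :: "complex mat" where
  "sigma_mat = mat r r (\<lambda>(i, j). trace (\<rho> ** D j ** D i))"

definition R_mat :: "complex mat" where
  "R_mat = minv (ReM sigma_mat) * sigma_mat * minv (ReM sigma_mat)"

text \<open>\<open>beta_gram \<beta> r\<close> is the matrix \<open>J\<close>-tilde of the statement; its upper left block
  \<open>beta_gram \<beta> d\<close> turns out to be \<open>J\<^sup>(\<^sup>\<beta>\<^sup>)\<close>.\<close>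

definition beta_gram :: "real \<Rightarrow> nat \<Rightarrow> complex mat" where
  "beta_gram \<beta> m =
    mat m m (\<lambda>(i, j). beta_ip \<beta> \<rho> (beta_transform \<beta> \<rho> (D i)) (beta_transform \<beta> \<rho> (D j)))"

lemma sigma_mat_carrier [simp]: "sigma_mat \<in> carrier_mat r r"
  by (simp add: sigma_mat_def)

lemma complex_independent: "(\<Sum>j<r. c j *: D j) = 0 \<Longrightarrow> \<forall>j<r. c j = 0"
  by (rule hermitian_independent_complex[OF hermitian real_independent])

lemma adjM_sigma_mat: "adjM sigma_mat = sigma_mat"
  using strictly_positive hermitian
  by (intro eq_matI) (auto simp: sigma_mat_def strictly_positive_def trace_hermitian_cnj)

lemma ReM_sigma_mat_eq_gram: "ReM sigma_mat = mat r r (\<lambda>(i, j). beta_ip 0 \<rho> (D i) (D j))"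
  using strictly_positive hermitian
  by (intro eq_matI) (auto simp: sigma_mat_def ReM_def strictly_positive_def beta_ip_0_hermitian)

lemma ReM_sigma_mat_invertible: "mat_inverse (ReM sigma_mat) \<noteq> None"
proof (rule mat_inverse_ne_None_if_inj)
  show "ReM sigma_mat \<in> carrier_mat r r" by simp
  fix v assume "v \<in> carrier_vec r" "ReM sigma_mat *\<^sub>v v = 0\<^sub>v r"
  then show "v = 0\<^sub>v r"
    using beta_ip_gram_injective[OF strictly_positive, of 0 D r] complex_independent
    by (simp add: ReM_sigma_mat_eq_gram)
qed

lemma comm_op_coefficients:
  obtains A where "A \<in> carrier_mat r r" and "\<And>l. l < r \<Longrightarrow> comm_op \<rho> (D l) = (\<Sum>m<r. A $$ (m, l) *: D m)"
proof -
  have "\<exists>a. comm_op \<rho> (D l) = (\<Sum>m<r. a m *\<^sub>R D m)" if "l < r" for l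
  proof -
    have "(\<Sum>j<r. (if j = l then 1 else 0) *\<^sub>R D j) = D l"
      using that by (simp add: if_distrib[of "\<lambda>x. x *\<^sub>R _"] cong: if_cong)
    then show ?thesis using comm_op_closed[of "\<lambda>j. if j = l then 1 else 0"] by metis
  qed
  then obtain a where "\<And>l. l < r \<Longrightarrow> comm_op \<rho> (D l) = (\<Sum>m<r. a l m *\<^sub>R D m)" by metis
  then show ?thesis
    by (intro that[of "mat r r (\<lambda>(m, l). complex_of_real (a l m))"]) (auto simp: scaleR_eq_op_smult)
qed

lemma ImM_sigma_mat:
  assumes A: "A \<in> carrier_mat r r"
    and comm: "\<And>l. l < r \<Longrightarrow> comm_op \<rho> (D l) = (\<Sum>m<r. A $$ (m, l) *: D m)"
  shows "ImM sigma_mat = ReM sigma_mat * A"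
proof (rule eq_matI)
  fix k l assume "k < dim_row (ReM sigma_mat * A)" "l < dim_col (ReM sigma_mat * A)"
  then have kl: "k < r" "l < r" using A by (simp_all add: ReM_def sigma_mat_def)
  have "(ReM sigma_mat * A) $$ (k, l) = (\<Sum>m<r. A $$ (m, l) * beta_ip 0 \<rho> (D k) (D m))"
    using kl A by (simp add: index_mult_mat_sum[OF _ A kl] ReM_sigma_mat_eq_gram mult.commute
        del: index_mult_mat)
  also have "\<dots> = beta_ip 0 \<rho> (D k) (comm_op \<rho> (D l))"
    by (simp add: comm kl beta_ip_sum_right)
  also have "\<dots> = ImM sigma_mat $$ (k, l)"
    using kl by (simp add: beta_ip_0_comm_op strictly_positive hermitian ImM_def sigma_mat_def)
  finally show "ImM sigma_mat $$ (k, l) = (ReM sigma_mat * A) $$ (k, l)" by simp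
qed (use A in \<open>simp_all add: ImM_def ReM_def sigma_mat_def\<close>)

lemma D_eq_sum_beta_transform:
  assumes \<beta>: "\<bar>\<beta>\<bar> \<le> 1" and k: "k < r"
    and comm: "\<And>l. l < r \<Longrightarrow> comm_op \<rho> (D l) = (\<Sum>m<r. A $$ (m, l) *: D m)"
  shows "D k = (\<Sum>j<r. ((if j = k then 1 else 0) + complex_of_real \<beta> * \<i> * A $$ (j, k))
      *: beta_transform \<beta> \<rho> (D j))"
proof -
  let ?T = "beta_transform \<beta> \<rho>" and ?c = "complex_of_real \<beta> * \<i>"
  have "(\<Sum>j<r. ((if j = k then 1 else 0) + ?c * A $$ (j, k)) *: ?T (D j))
      = (\<Sum>j<r. (if j = k then ?T (D j) else 0)) + ?c *: (\<Sum>j<r. A $$ (j, k) *: ?T (D j))"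
    by (simp add: op_smult_add_left sum.distrib op_smult_sum op_smult_op_smult
        if_distrib[of "\<lambda>x. x *: _"] cong: if_cong)
  also have "\<dots> = ?T (D k) + ?c *: comm_op \<rho> (?T (D k))"
    using k by (simp add: comm[OF k, symmetric] beta_transform_sum[OF strictly_positive \<beta>, symmetric]
        beta_transform_comm_op[OF strictly_positive \<beta>])
  also have "\<dots> = D k" by (rule beta_transform_eq[OF strictly_positive \<beta>])
  finally show ?thesis by simp
qed

lemma mult_beta_gram_eq_ReM_sigma_mat:
  assumes \<beta>: "\<bar>\<beta>\<bar> \<le> 1" and A: "A \<in> carrier_mat r r"
    and comm: "\<And>l. l < r \<Longrightarrow> comm_op \<rho> (D l) = (\<Sum>m<r. A $$ (m, l) *: D m)"
  shows "(1\<^sub>m r - (complex_of_real \<beta> * \<i>) \<cdot>\<^sub>m adjM A)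
      * beta_gram \<beta> r = ReM sigma_mat"
proof (rule eq_matI)
  let ?T = "beta_transform \<beta> \<rho>" and ?c = "complex_of_real \<beta> * \<i>"
  fix k l assume "k < dim_row (ReM sigma_mat)" "l < dim_col (ReM sigma_mat)"
  then have kl: "k < r" "l < r" by (simp_all add: ReM_def sigma_mat_def)
  have "((1\<^sub>m r - ?c \<cdot>\<^sub>m adjM A) * beta_gram \<beta> r) $$ (k, l)
      = (\<Sum>j<r. cnj ((if j = k then 1 else 0) + ?c * A $$ (j, k)) * beta_ip 0 \<rho> (?T (D j)) (D l))"
    using kl A by (auto simp: beta_gram_def index_mult_mat_sum[of _ r r _ r]
        beta_ip_beta_transform_right[OF strictly_positive \<beta>]
        minus_carrier_mat intro!: sum.cong simp del: index_mult_mat)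
  also have "\<dots> = beta_ip 0 \<rho> (D k) (D l)"
    by (subst D_eq_sum_beta_transform[OF \<beta> kl(1) comm]) (simp_all add: beta_ip_sum_left)
  also have "\<dots> = ReM sigma_mat $$ (k, l)" using kl by (simp add: ReM_sigma_mat_eq_gram)
  finally show "((1\<^sub>m r - ?c \<cdot>\<^sub>m adjM A) * beta_gram \<beta> r) $$ (k, l) = ReM sigma_mat $$ (k, l)" .
qed (use A in \<open>simp_all add: ReM_def sigma_mat_def beta_gram_def\<close>)

lemma beta_transform_independent:
  assumes \<beta>: "\<bar>\<beta>\<bar> \<le> 1" and m: "m \<le> r"
    and zero: "(\<Sum>j<m. c j *: beta_transform \<beta> \<rho> (D j)) = 0"
  shows "\<forall>j<m. c j = 0"
proof -
  have "(\<Sum>j<m. c j *: D j) = 0"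
    using zero by (simp add: beta_transform_sum[OF strictly_positive \<beta>, symmetric]
        beta_transform_eq_0_iff[OF strictly_positive \<beta>])
  moreover have "(\<Sum>j<r. (if j < m then c j else 0) *: D j) = (\<Sum>j<m. c j *: D j)"
    using m by (intro sum.mono_neutral_cong_right) auto
  ultimately have "\<forall>j<r. (if j < m then c j else 0) = 0"
    using complex_independent[of "\<lambda>j. if j < m then c j else 0"] by simp
  then show ?thesis using m by (metis less_le_trans)
qed

lemma beta_gram_inverse:
  assumes \<beta>: "\<bar>\<beta>\<bar> \<le> 1"
  shows "mat_inverse (beta_gram \<beta> r) = Some (beta_part \<beta> R_mat)"
    and "adjM (beta_part \<beta> R_mat) = beta_part \<beta> R_mat"
proof -
  obtain A where A: "A \<in> carrier_mat r r"
    and comm: "\<And>l. l < r \<Longrightarrow> comm_op \<rho> (D l) = (\<Sum>m<r. A $$ (m, l) *: D m)"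
    using comm_op_coefficients by blast
  obtain H where H: "mat_inverse (ReM sigma_mat) = Some H" using ReM_sigma_mat_invertible by auto
  then have "R_mat = H * sigma_mat * H" by (simp add: R_mat_def minv_def)
  then show "mat_inverse (beta_gram \<beta> r) = Some (beta_part \<beta> R_mat)"
    and "adjM (beta_part \<beta> R_mat) = beta_part \<beta> R_mat"
    using mat_inverse_beta_part[OF sigma_mat_carrier adjM_sigma_mat H A ImM_sigma_mat[OF A comm] _
        mult_beta_gram_eq_ReM_sigma_mat[OF \<beta> A comm]]
    by (simp_all add: beta_gram_def)
qed

lemma R_mat_carrier: "R_mat \<in> carrier_mat r r"
proof -
  obtain H where H: "mat_inverse (ReM sigma_mat) = Some H" using ReM_sigma_mat_invertible by auto
  then have "H \<in> carrier_mat r r" using mat_inverse(2)[of "ReM sigma_mat" r H] by simp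
  then show ?thesis
    unfolding R_mat_def minv_def H option.sel by (intro mult_carrier_mat[of _ r r] sigma_mat_carrier)
qed

lemma beta_gram_invertible:
  assumes \<beta>: "\<bar>\<beta>\<bar> \<le> 1" and m: "m \<le> r"
  shows "mat_inverse (beta_gram \<beta> m) \<noteq> None"
proof (rule mat_inverse_ne_None_if_inj)
  fix v assume "v \<in> carrier_vec m" "beta_gram \<beta> m *\<^sub>v v = 0\<^sub>v m"
  then show "v = 0\<^sub>v m"
    using beta_ip_gram_injective[OF strictly_positive \<beta> beta_transform_independent[OF \<beta> m]]
    by (simp add: beta_gram_def)
qed (simp add: beta_gram_def)

lemma beta_gram_block_inverse:
  assumes \<beta>: "\<bar>\<beta>\<bar> \<le> 1" and d: "d \<le> r"
  defines "R1 \<equiv> mat d d (\<lambda>(i, j). R_mat $$ (i, j))"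
    and "R2 \<equiv> mat (r - d) d (\<lambda>(i, j). R_mat $$ (d + i, j))"
    and "R3 \<equiv> mat (r - d) (r - d) (\<lambda>(i, j). R_mat $$ (d + i, d + j))"
  shows "mat_inverse (beta_part \<beta> R3) \<noteq> None"
    and "mat_inverse (beta_gram \<beta> d)
      = Some (beta_part \<beta> R1 - adjM (beta_part \<beta> R2) * minv (beta_part \<beta> R3) * beta_part \<beta> R2)"
proof -
  define e where "e = r - d"
  have r: "r = d + e" using d by (simp add: e_def)
  have M: "beta_gram \<beta> r \<in> carrier_mat (d + e) (d + e)" by (simp add: beta_gram_def r)
  have P: "beta_part \<beta> R_mat \<in> carrier_mat (d + e) (d + e)"
    using R_mat_carrier by (simp add: beta_part_def ReM_def ImM_def r)
  have MP: "beta_gram \<beta> r * beta_part \<beta> R_mat = 1\<^sub>m (d + e)"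
    using mat_inverse(2)[OF M beta_gram_inverse(1)[OF \<beta>]] by simp
  have "mat d d (\<lambda>(i, j). beta_gram \<beta> r $$ (i, j)) = beta_gram \<beta> d"
    using d by (auto simp: beta_gram_def intro!: cong_mat)
  then have "fst (split_block (beta_gram \<beta> r) d d) = beta_gram \<beta> d"
    by (simp add: split_block_def Let_def)
  then obtain M2 M3 M4 where split_M: "split_block (beta_gram \<beta> r) d d = (beta_gram \<beta> d, M2, M3, M4)"
    by (cases "split_block (beta_gram \<beta> r) d d") auto
  have split_P: "split_block (beta_part \<beta> R_mat) d d
      = (beta_part \<beta> R1, adjM (beta_part \<beta> R2), beta_part \<beta> R2, beta_part \<beta> R3)"
    unfolding R1_def R2_def R3_def e_def[symmetric]
    by (rule split_block_hermitian_beta_part)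
      (use R_mat_carrier beta_gram_inverse(2)[OF \<beta>] r in simp_all)
  obtain Q where "mat_inverse (beta_part \<beta> R3) = Some Q"
    and "mat_inverse (beta_gram \<beta> d)
      = Some (beta_part \<beta> R1 - adjM (beta_part \<beta> R2) * Q * beta_part \<beta> R2)"
    using schur_complement_inverse[OF M P MP split_M split_P beta_gram_invertible[OF \<beta> d]] by blast
  then show "mat_inverse (beta_part \<beta> R3) \<noteq> None"
    and "mat_inverse (beta_gram \<beta> d)
      = Some (beta_part \<beta> R1 - adjM (beta_part \<beta> R2) * minv (beta_part \<beta> R3) * beta_part \<beta> R2)"
    by (simp_all add: minv_def)
qed

end

theorem lemma4:
  fixes \<rho> :: "real^'d \<Rightarrow> complex^'n^'n"
    and \<Theta> :: "(real^'d) set"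
    and \<theta>0 :: "real^'d"
    and \<rho>' :: "real^'d \<Rightarrow> complex^'n^'n"
    and idx :: "nat \<Rightarrow> 'd"
    and d r :: nat
    and D :: "nat \<Rightarrow> complex^'n^'n"
    and \<beta> :: real
  assumes "open \<Theta>" and "\<theta>0 \<in> \<Theta>"
    and "\<forall>\<theta>\<in>\<Theta>. density_op (\<rho> \<theta>)"
    and "\<rho> differentiable_on \<Theta>"
    and "(\<rho> has_derivative \<rho>') (at \<theta>0)"
    and "strictly_positive (\<rho> \<theta>0)"
    and "d = CARD('d)" and "bij_betw idx {..<d} UNIV"
    and "d \<le> r"
    and "\<forall>j<r. hermitian_op (D j)"
    and "\<forall>c::nat \<Rightarrow> real. (\<Sum>j<r. c j *\<^sub>R D j) = 0 \<longrightarrow> (\<forall>j<r. c j = 0)"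
    and "\<forall>c::nat \<Rightarrow> real. \<exists>c'::nat \<Rightarrow> real.
           comm_op (\<rho> \<theta>0) (\<Sum>j<r. c j *\<^sub>R D j) = (\<Sum>j<r. c' j *\<^sub>R D j)"
    and "\<forall>i<d. D i = SLD (\<rho> \<theta>0) (\<rho>' (axis (idx i) 1))"
    and "0 \<le> \<beta>" and "\<beta> \<le> 1"
  shows
    "let \<rho>0 = \<rho> \<theta>0;
         \<Sigma> = Matrix.mat r r (\<lambda>(i,j). trace (\<rho>0 ** D j ** D i));
         R = minv (ReM \<Sigma>) * \<Sigma> * minv (ReM \<Sigma>);
         R1 = Matrix.mat d d (\<lambda>(i,j). R $$ (i,j));
         R2 = Matrix.mat (r - d) d (\<lambda>(i,j). R $$ (d + i, j));
         R3 = Matrix.mat (r - d) (r - d) (\<lambda>(i,j). R $$ (d + i, d + j));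
         Db = (\<lambda>i. beta_transform \<beta> \<rho>0 (D i));
         Jt = Matrix.mat r r (\<lambda>(i,j). beta_ip \<beta> \<rho>0 (Db i) (Db j));
         Lb = (\<lambda>i. beta_logder \<beta> \<rho>0 (\<rho>' (axis (idx i) 1)));
         J = Matrix.mat d d (\<lambda>(i,j). beta_ip \<beta> \<rho>0 (Lb i) (Lb j))
     in mat_inverse Jt = Some (beta_part \<beta> R)
        \<and> mat_inverse (beta_part \<beta> R3) \<noteq> None
        \<and> mat_inverse J = Some (beta_part \<beta> R1
              - adjM (beta_part \<beta> R2) * minv (beta_part \<beta> R3) * beta_part \<beta> R2)"
proof -
  interpret invariant_extension "\<rho> \<theta>0" r D
    using assms(6,10-12) by unfold_locales auto
  have \<beta>: "\<bar>\<beta>\<bar> \<le> 1" using assms(14,15) by simp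
  have "beta_logder \<beta> (\<rho> \<theta>0) (\<rho>' (axis (idx i) 1)) = beta_transform \<beta> (\<rho> \<theta>0) (D i)" if "i < d" for i
    using that assms(13) by (simp add: beta_logder_eq_beta_transform_SLD[OF strictly_positive \<beta>])
  then have "mat d d (\<lambda>(i, j). beta_ip \<beta> (\<rho> \<theta>0) (beta_logder \<beta> (\<rho> \<theta>0) (\<rho>' (axis (idx i) 1)))
      (beta_logder \<beta> (\<rho> \<theta>0) (\<rho>' (axis (idx j) 1)))) = beta_gram \<beta> d"
    by (auto simp: beta_gram_def intro!: cong_mat)
  then show ?thesis
    using beta_gram_inverse(1)[OF \<beta>] beta_gram_block_inverse[OF \<beta> assms(9)]
    unfolding Let_def sigma_mat_def[symmetric] R_mat_def[symmetric]
    by (simp add: beta_gram_def)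
qed

end
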